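(* Consider the heterogeneous subgradient algorithm as in the setting below. Suppose $\{\mathbb G(t)\}$ is uniformly strongly connected by sub-sequences of length $L$ and $\|g_i(t)\|\le G$ for all $i,t$, for some $G>0$. Let $\eta,\mu$ be constants as described below. Then for all $t\ge0$ and $i\in\mathcal V$, $$\Big\|z_i(t+1)-\frac1n\sum_{k=1}^nx_k(t)\Big\|\le\frac8\eta\mu^t\sum_{k=1}^n\|x_k(0)\|+\frac{8nG}{\eta\mu}\sum_{s=0}^t\mu^{t-s}\alpha(s).$$ If in addition $\{\alpha(t)\}$ is positive, non-increasing, with $\sum_t\alpha(t)=\infty$ and $\sum_t\alpha^2(t)<\infty$, then for all $t\ge0$ and $i\in\mathcal V$, $$\Big\|z_i(t+1)-\frac1n\sum_{k=1}^nx_k(t)\Big\|\le\frac8\eta\mu^t\sum_{k=1}^n\|x_k(0)\|+\frac{8nG}{\eta\mu(1-\mu)}\big(\alpha(0)\mu^{t/2}+\alpha(\lceil t/2\rceil)\big).$$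
   Context: Setting. Fix $n$ agents, $\mathcal V=\{1,\dots,n\}$. For each $t\in\{0,1,2,\dots\}$, $\mathbb G(t)=(\mathcal V,\mathcal E(t))$ is a directed graph containing a self-arc $(i,i)$ at every vertex; $\mathcal N_i(t)=\{j:(j,i)\in\mathcal E(t)\}$ and $\mathcal N_i^-(t)=\{k:(i,k)\in\mathcal E(t)\}$. Weights $w_{ij}(t)$ are positive for $j\in\mathcal N_i(t)$ and $w_{ij}(t)=0$ otherwise, and satisfy: there is $\beta>0$ with $w_{ij}(t)\ge\beta$ whenever $j\in\mathcal N_i(t)$, and $\sum_{j\in\mathcal N_i^-(t)}w_{ji}(t)=1$ for all $i,t$. Write $\Phi_W(t,\tau)=W(t-1)\cdots W(\tau)$ for $t>\tau$, where $W(t)=[w_{ij}(t)]$. Uniformly strongly connected by sub-sequences of length $L$: for every $t\ge0$ the graph with vertex set $\mathcal V$ and edge set $\bigcup_{k=t}^{t+L-1}\mathcal E(k)$ is strongly connected. Heterogeneous subgradient algorithm: each agent $i$ has a convex $f_i:\mathbb R^d\to\mathbb R$ and an arbitrary switching signal $\sigma_i(t)\in\{0,1\}$. With stepsizes $\alpha(t)>0$: $x_i(t+1)=\sum_{j\in\mathcal N_i(t)}w_{ij}(t)[x_j(t)-\alpha(t)g_j(t)\sigma_j(t)]-\alpha(t)g_i(t)(1-\sigma_i(t))$, $x_i(0)\in\mathbb R^d$; $y_i(t+1)=\sum_{j\in\mathcal N_i(t)}w_{ij}(t)y_j(t)$, $y_i(0)=1$; $z_i(t)=x_i(t)/y_i(t)$;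 $g_i(t)$ is a subgradient of $f_i$ at $z_i(t)$. (All $\sigma_i\equiv1$ gives subgradient-push; all $\sigma_i\equiv0$ gives push-subgradient.) Constants: $\eta>0$ is any constant with $y_i(t)\ge\eta$ for all $i,t$ (e.g. $\eta=n^{-nL}$); $\mu\in(0,1)$ is any constant for which there exist stochastic vectors $\phi(t)\in\mathbb R^n$ with $|[\Phi_W(t+1,s)]_{ij}-\phi_i(t)|\le4\mu^{t-s}$ for all $i,j\in\mathcal V$, $t\ge s\ge0$ (e.g. $\mu=(1-n^{-nL})^{1/L}$). *)

theory Defs
  imports "HOL-Analysis.Analysis"
begin

definition in_nbrs :: "('v \<times> 'v) set \<Rightarrow> 'v \<Rightarrow> 'v set" where
  "in_nbrs E i = {j. (j, i) \<in> E}"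

definition out_nbrs :: "('v \<times> 'v) set \<Rightarrow> 'v \<Rightarrow> 'v set" where
  "out_nbrs E i = {k. (i, k) \<in> E}"

definition strongly_connected_graph :: "('v \<times> 'v) set \<Rightarrow> bool" where
  "strongly_connected_graph E \<longleftrightarrow> (\<forall>i j. (i, j) \<in> E\<^sup>*)"

definition USC :: "(nat \<Rightarrow> ('v \<times> 'v) set) \<Rightarrow> nat \<Rightarrow> bool" where
  "USC E L \<longleftrightarrow> (\<forall>t. strongly_connected_graph (\<Union>k\<in>{t..<t+L}. E k))"

definition mat_mul :: "('v::finite \<Rightarrow> 'v \<Rightarrow> real) \<Rightarrow> ('v \<Rightarrow> 'v \<Rightarrow> real) \<Rightarrow> 'v \<Rightarrow> 'v \<Rightarrow> real" where
  "mat_mul A B i j = (\<Sum>k\<in>UNIV. A i k * B k j)"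

fun prodW :: "(nat \<Rightarrow> 'v::finite \<Rightarrow> 'v \<Rightarrow> real) \<Rightarrow> nat \<Rightarrow> nat \<Rightarrow> 'v \<Rightarrow> 'v \<Rightarrow> real" where
  "prodW W tau 0 = (\<lambda>i j. if i = j then 1 else 0)"
| "prodW W tau (Suc k) = mat_mul (W (tau + k)) (prodW W tau k)"

text \<open>Phi_W(t, tau) = W(t-1) ... W(tau), for t > tau.\<close>
definition PhiW :: "(nat \<Rightarrow> 'v::finite \<Rightarrow> 'v \<Rightarrow> real) \<Rightarrow> nat \<Rightarrow> nat \<Rightarrow> 'v \<Rightarrow> 'v \<Rightarrow> real" where
  "PhiW W t tau = prodW W tau (t - tau)"

definition stochastic_vec :: "('v::finite \<Rightarrow> real) \<Rightarrow> bool" where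
  "stochastic_vec p \<longleftrightarrow> (\<forall>i. p i \<ge> 0) \<and> (\<Sum>i\<in>UNIV. p i) = 1"

definition is_subgradient :: "('a::real_inner \<Rightarrow> real) \<Rightarrow> 'a \<Rightarrow> 'a \<Rightarrow> bool" where
  "is_subgradient f z g \<longleftrightarrow> (\<forall>u. f u \<ge> f z + inner g (u - z))"

end

theory Submission
  imports Defs
begin

text \<open>
  The numerators x and the weights y both obey a linear recursion
  v(t+1) = W(t) v(t) - d(t) with column-stochastic W (and d = 0 for y).
  Unrolling it writes x(t+1) through the products \<Phi>(t+1,s), column-stochasticity
  makes the total of x(t) equal to the total of x(0) minus the accumulated
  perturbations, and y_i(t+1) is the i-th row sum of \<Phi>(t+1,0), so every entry of row i
  of \<Phi>(t+1,s) lies within 8 \<mu>^(t-s) of y_i(t+1)/n. Hence x_i(t+1) minus y_i(t+1)/n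
  times the total of x(t) is a geometrically weighted sum of the perturbations, each of
  total size at most n G \<alpha>(s) whether an agent takes its subgradient step before or
  after mixing; dividing by y_i(t+1) \<ge> \<eta> gives the first bound. The second bound
  splits the convolution of \<mu>^(t-s) with \<alpha>(s) at s = \<lceil>t/2\<rceil>.
\<close>

lemma PhiW_same: "PhiW W t t i j = (if i = j then 1 else 0)"
  by (simp add: PhiW_def)

lemma PhiW_Suc:
  assumes "s \<le> t"
  shows "PhiW W (Suc t) s i j = (\<Sum>l\<in>UNIV. W t i l * PhiW W t s l j)"
  using assms by (simp add: PhiW_def Suc_diff_le mat_mul_def)

lemma PhiW_Suc_scaleR:
  fixes a :: "'v::finite \<Rightarrow> 'b::real_vector"
  assumes "s \<le> t"
  shows "(\<Sum>l\<in>UNIV. W t i l *\<^sub>R (\<Sum>j\<in>UNIV. PhiW W t s l j *\<^sub>R a j))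
       = (\<Sum>j\<in>UNIV. PhiW W (Suc t) s i j *\<^sub>R a j)"
  unfolding PhiW_Suc[OF assms] scaleR_sum_right scaleR_sum_left scaleR_scaleR
  by (rule sum.swap)

lemma sum_delta_scaleR:
  fixes a :: "'v::finite \<Rightarrow> 'b::real_vector"
  shows "(\<Sum>j\<in>UNIV. (if i = j then 1 else 0) *\<^sub>R a j) = a i"
  by (simp add: if_distrib[of "\<lambda>c. c *\<^sub>R _"] cong: if_cong)

lemma linear_recursion_closed_form:
  fixes x d :: "nat \<Rightarrow> 'v::finite \<Rightarrow> 'b::real_vector"
  assumes rec: "\<And>t i. x (Suc t) i = (\<Sum>j\<in>UNIV. W t i j *\<^sub>R x t j) - d t i"
  shows "x t i = (\<Sum>j\<in>UNIV. PhiW W t 0 i j *\<^sub>R x 0 j)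
               - (\<Sum>s<t. \<Sum>j\<in>UNIV. PhiW W t (Suc s) i j *\<^sub>R d s j)"
proof (induction t arbitrary: i)
  case 0
  show ?case by (simp add: PhiW_same sum_delta_scaleR)
next
  case (Suc t)
  have "(\<Sum>l\<in>UNIV. W t i l *\<^sub>R (\<Sum>s<t. \<Sum>j\<in>UNIV. PhiW W t (Suc s) l j *\<^sub>R d s j))
      = (\<Sum>s<t. \<Sum>l\<in>UNIV. W t i l *\<^sub>R (\<Sum>j\<in>UNIV. PhiW W t (Suc s) l j *\<^sub>R d s j))"
    unfolding scaleR_sum_right by (rule sum.swap)
  also have "\<dots> = (\<Sum>s<t. \<Sum>j\<in>UNIV. PhiW W (Suc t) (Suc s) i j *\<^sub>R d s j)"
    by (intro sum.cong refl PhiW_Suc_scaleR) auto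
  finally have perturbations: "(\<Sum>l\<in>UNIV. W t i l *\<^sub>R (\<Sum>s<t. \<Sum>j\<in>UNIV. PhiW W t (Suc s) l j *\<^sub>R d s j))
      = (\<Sum>s<t. \<Sum>j\<in>UNIV. PhiW W (Suc t) (Suc s) i j *\<^sub>R d s j)" .
  have "d t i = (\<Sum>j\<in>UNIV. PhiW W (Suc t) (Suc t) i j *\<^sub>R d t j)"
    by (simp add: PhiW_same sum_delta_scaleR)
  then show ?case
    unfolding rec Suc.IH scaleR_diff_right sum_subtractf perturbations
    by (simp add: PhiW_Suc_scaleR sum.lessThan_Suc)
qed

lemma linear_recursion_sum:
  fixes x d :: "nat \<Rightarrow> 'v::finite \<Rightarrow> 'b::real_vector"
  assumes rec: "\<And>t i. x (Suc t) i = (\<Sum>j\<in>UNIV. W t i j *\<^sub>R x t j) - d t i"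
    and column_sum: "\<And>t j. (\<Sum>i\<in>UNIV. W t i j) = 1"
  shows "(\<Sum>i\<in>UNIV. x t i) = (\<Sum>i\<in>UNIV. x 0 i) - (\<Sum>s<t. \<Sum>i\<in>UNIV. d s i)"
proof (induction t)
  case (Suc t)
  have "(\<Sum>i\<in>UNIV. \<Sum>j\<in>UNIV. W t i j *\<^sub>R x t j) = (\<Sum>j\<in>UNIV. x t j)"
    by (subst sum.swap) (simp add: scaleR_sum_left[symmetric] column_sum)
  then show ?case
    by (simp add: rec sum_subtractf Suc.IH)
qed simp

lemma linear_recursion_deviation:
  fixes x d :: "nat \<Rightarrow> 'v::finite \<Rightarrow> 'b::real_vector"
  assumes rec: "\<And>t i. x (Suc t) i = (\<Sum>j\<in>UNIV. W t i j *\<^sub>R x t j) - d t i"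
    and column_sum: "\<And>t j. (\<Sum>i\<in>UNIV. W t i j) = 1"
  shows "x (Suc t) i - c *\<^sub>R (\<Sum>k\<in>UNIV. x t k)
       = (\<Sum>j\<in>UNIV. (PhiW W (Suc t) 0 i j - c) *\<^sub>R x 0 j)
         - (\<Sum>s<t. \<Sum>j\<in>UNIV. (PhiW W (Suc t) (Suc s) i j - c) *\<^sub>R d s j) - d t i"
proof -
  have "(\<Sum>j\<in>UNIV. PhiW W (Suc t) (Suc t) i j *\<^sub>R d t j) = d t i"
    by (simp add: PhiW_same sum_delta_scaleR)
  then have x_eq: "x (Suc t) i = (\<Sum>j\<in>UNIV. PhiW W (Suc t) 0 i j *\<^sub>R x 0 j)
      - (\<Sum>s<t. \<Sum>j\<in>UNIV. PhiW W (Suc t) (Suc s) i j *\<^sub>R d s j) - d t i"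
    using linear_recursion_closed_form[where x = x and d = d, OF rec, of "Suc t"]
    by (simp add: sum.lessThan_Suc)
  have sum_eq: "c *\<^sub>R (\<Sum>k\<in>UNIV. x t k) = (\<Sum>j\<in>UNIV. c *\<^sub>R x 0 j)
      - (\<Sum>s<t. \<Sum>j\<in>UNIV. c *\<^sub>R d s j)"
    by (subst linear_recursion_sum[where x = x and d = d, OF rec column_sum])
      (simp only: scaleR_diff_right scaleR_sum_right)
  have regroup: "a - b - e - (a' - b') = (a - a') - (b - b') - e" for a b e a' b' :: 'b
    by (simp add: algebra_simps)
  show ?thesis
    unfolding x_eq sum_eq scaleR_diff_left sum_subtractf by (rule regroup)
qed

lemma norm_linear_recursion_deviation_le:
  fixes x d :: "nat \<Rightarrow> 'v::finite \<Rightarrow> 'b::real_normed_vector"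
  assumes rec: "\<And>t i. x (Suc t) i = (\<Sum>j\<in>UNIV. W t i j *\<^sub>R x t j) - d t i"
    and column_sum: "\<And>t j. (\<Sum>i\<in>UNIV. W t i j) = 1"
    and mixing: "\<And>s j. s \<le> t \<Longrightarrow> \<bar>PhiW W (Suc t) s i j - c\<bar> \<le> K * \<mu> ^ (t - s)"
    and perturbation: "\<And>s. (\<Sum>j\<in>UNIV. norm (d s j)) \<le> D s"
  shows "norm (x (Suc t) i - c *\<^sub>R (\<Sum>k\<in>UNIV. x t k))
       \<le> K * \<mu> ^ t * (\<Sum>j\<in>UNIV. norm (x 0 j))
         + (\<Sum>s<t. K * \<mu> ^ (t - Suc s) * D s) + D t"
proof -
  have weighted_le: "norm (\<Sum>j\<in>UNIV. (PhiW W (Suc t) s i j - c) *\<^sub>R a j)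
      \<le> K * \<mu> ^ (t - s) * (\<Sum>j\<in>UNIV. norm (a j))" if "s \<le> t" for s and a :: "'v \<Rightarrow> 'b"
    unfolding sum_distrib_left
    by (intro sum_norm_le) (simp add: mult_right_mono mixing[OF that])
  have K_nonneg: "0 \<le> K * \<mu> ^ (t - s)" if "s \<le> t" for s
    using mixing[OF that] abs_ge_zero order_trans by blast
  have "norm (\<Sum>s<t. \<Sum>j\<in>UNIV. (PhiW W (Suc t) (Suc s) i j - c) *\<^sub>R d s j)
      \<le> (\<Sum>s<t. K * \<mu> ^ (t - Suc s) * D s)"
  proof (intro sum_norm_le)
    fix s assume "s \<in> {..<t}"
    then have "Suc s \<le> t" by simp
    then show "norm (\<Sum>j\<in>UNIV. (PhiW W (Suc t) (Suc s) i j - c) *\<^sub>R d s j) \<le> K * \<mu> ^ (t - Suc s) * D s"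
      using weighted_le mult_left_mono[OF perturbation K_nonneg] order_trans by blast
  qed
  moreover have "norm (d t i) \<le> D t"
    using member_le_sum[of i UNIV "\<lambda>j. norm (d t j)"] perturbation[of t] by simp
  moreover have "norm (\<Sum>j\<in>UNIV. (PhiW W (Suc t) 0 i j - c) *\<^sub>R x 0 j)
      \<le> K * \<mu> ^ t * (\<Sum>j\<in>UNIV. norm (x 0 j))"
    using weighted_le[of 0] by simp
  ultimately show ?thesis
    unfolding linear_recursion_deviation[where x = x and d = d, OF rec column_sum]
    by (smt (verit) norm_triangle_ineq4)
qed

lemma abs_average_diff_le:
  fixes a :: "'v::finite \<Rightarrow> real"
  assumes "\<And>j. \<bar>a j - p\<bar> \<le> e"
  shows "\<bar>(\<Sum>j\<in>UNIV. a j) / real CARD('v) - p\<bar> \<le> e"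
proof -
  have "(\<Sum>j\<in>UNIV. a j) / real CARD('v) - p = (\<Sum>j\<in>UNIV. a j - p) / real CARD('v)"
    by (simp add: sum_subtractf field_simps)
  moreover have "\<bar>\<Sum>j\<in>UNIV. a j - p\<bar> \<le> real CARD('v) * e"
    by (rule order_trans[OF sum_abs]) (use sum_mono[of UNIV "\<lambda>j. \<bar>a j - p\<bar>" "\<lambda>_. e"] assms in simp)
  ultimately show ?thesis
    by (simp add: pos_divide_le_eq mult.commute)
qed

lemma PhiW_row_average_close:
  fixes W :: "nat \<Rightarrow> 'v::finite \<Rightarrow> 'v \<Rightarrow> real"
  assumes mixing: "\<And>j s. s \<le> t \<Longrightarrow> \<bar>PhiW W (Suc t) s i j - p\<bar> \<le> 4 * \<mu> ^ (t - s)"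
    and \<mu>_range: "0 \<le> \<mu>" "\<mu> \<le> 1" and "s \<le> t"
  shows "\<bar>PhiW W (Suc t) s i j - (\<Sum>k\<in>UNIV. PhiW W (Suc t) 0 i k) / real CARD('v)\<bar>
       \<le> 8 * \<mu> ^ (t - s)"
proof -
  have "\<bar>(\<Sum>k\<in>UNIV. PhiW W (Suc t) 0 i k) / real CARD('v) - p\<bar> \<le> 4 * \<mu> ^ t"
    by (rule abs_average_diff_le) (use mixing[of 0] in simp)
  moreover have "\<mu> ^ t \<le> \<mu> ^ (t - s)"
    using \<mu>_range by (intro power_decreasing) auto
  ultimately show ?thesis
    using mixing[OF \<open>s \<le> t\<close>, of j] by (smt (verit) mult_left_mono)
qed

lemma push_sum_ratio_deviation_le:
  fixes x d :: "nat \<Rightarrow> 'v::finite \<Rightarrow> 'b::real_normed_vector"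
    and y \<phi> :: "nat \<Rightarrow> 'v \<Rightarrow> real"
  assumes x_rec: "\<And>t i. x (Suc t) i = (\<Sum>j\<in>UNIV. W t i j *\<^sub>R x t j) - d t i"
    and y_rec: "\<And>t i. y (Suc t) i = (\<Sum>j\<in>UNIV. W t i j * y t j)"
    and y_0: "\<And>i. y 0 i = 1"
    and y_ge: "\<And>t i. \<eta> \<le> y t i" and \<eta>_pos: "0 < \<eta>"
    and column_sum: "\<And>t j. (\<Sum>i\<in>UNIV. W t i j) = 1"
    and \<mu>_range: "0 \<le> \<mu>" "\<mu> \<le> 1"
    and mixing: "\<And>i j t s. s \<le> t \<Longrightarrow> \<bar>PhiW W (Suc t) s i j - \<phi> t i\<bar> \<le> 4 * \<mu> ^ (t - s)"
    and perturbation: "\<And>s. (\<Sum>j\<in>UNIV. norm (d s j)) \<le> D s"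
  shows "norm ((1 / y (Suc t) i) *\<^sub>R x (Suc t) i - (1 / real CARD('v)) *\<^sub>R (\<Sum>k\<in>UNIV. x t k))
       \<le> (8 * \<mu> ^ t * (\<Sum>j\<in>UNIV. norm (x 0 j)) + (\<Sum>s<t. 8 * \<mu> ^ (t - Suc s) * D s) + D t) / \<eta>"
proof -
  define c where "c = y (Suc t) i / real CARD('v)"
  have "y (Suc t) i = (\<Sum>j\<in>UNIV. PhiW W (Suc t) 0 i j)"
    using linear_recursion_closed_form[where x = y and d = "\<lambda>_ _. 0", of W "Suc t" i] y_rec y_0
    by simp
  then have deviation: "norm (x (Suc t) i - c *\<^sub>R (\<Sum>k\<in>UNIV. x t k))
      \<le> 8 * \<mu> ^ t * (\<Sum>j\<in>UNIV. norm (x 0 j)) + (\<Sum>s<t. 8 * \<mu> ^ (t - Suc s) * D s) + D t"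
    unfolding c_def
    using PhiW_row_average_close[OF mixing \<mu>_range]
    by (intro norm_linear_recursion_deviation_le[where x = x and d = d, OF x_rec column_sum _ perturbation])
      simp
  have y_pos: "0 < y (Suc t) i"
    using y_ge[of "Suc t" i] \<eta>_pos by linarith
  have "(1 / y (Suc t) i) *\<^sub>R x (Suc t) i - (1 / real CARD('v)) *\<^sub>R (\<Sum>k\<in>UNIV. x t k)
      = (1 / y (Suc t) i) *\<^sub>R (x (Suc t) i - c *\<^sub>R (\<Sum>k\<in>UNIV. x t k))"
    using y_pos by (simp add: c_def scaleR_diff_right)
  then have "norm ((1 / y (Suc t) i) *\<^sub>R x (Suc t) i - (1 / real CARD('v)) *\<^sub>R (\<Sum>k\<in>UNIV. x t k))
      = norm (x (Suc t) i - c *\<^sub>R (\<Sum>k\<in>UNIV. x t k)) / y (Suc t) i"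
    using y_pos by simp
  also have "\<dots> \<le> norm (x (Suc t) i - c *\<^sub>R (\<Sum>k\<in>UNIV. x t k)) / \<eta>"
    using y_ge \<eta>_pos y_pos by (intro divide_left_mono) auto
  also have "\<dots> \<le> (8 * \<mu> ^ t * (\<Sum>j\<in>UNIV. norm (x 0 j)) + (\<Sum>s<t. 8 * \<mu> ^ (t - Suc s) * D s) + D t) / \<eta>"
    using deviation \<eta>_pos by (intro divide_right_mono) auto
  finally show ?thesis .
qed

lemma sum_lessThan_power_Suc_le:
  fixes \<mu> K :: real and a :: "nat \<Rightarrow> real"
  assumes \<mu>_range: "0 < \<mu>" "\<mu> \<le> 1" and K_ge: "1 \<le> K" and a_nonneg: "\<And>s. 0 \<le> a s"
  shows "(\<Sum>s<t. K * \<mu> ^ (t - Suc s) * a s) + a t \<le> K / \<mu> * (\<Sum>s\<le>t. \<mu> ^ (t - s) * a s)"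
proof -
  have "K * \<mu> ^ (t - Suc s) = K / \<mu> * \<mu> ^ (t - s)" if "s < t" for s
  proof -
    have "t - s = Suc (t - Suc s)" using that by simp
    then show ?thesis using \<mu>_range by simp
  qed
  then have "(\<Sum>s<t. K * \<mu> ^ (t - Suc s) * a s) = K / \<mu> * (\<Sum>s<t. \<mu> ^ (t - s) * a s)"
    by (simp add: sum_distrib_left mult.assoc)
  moreover have "1 \<le> K / \<mu>"
    using \<mu>_range K_ge by (simp add: le_divide_eq)
  then have "a t \<le> K / \<mu> * a t"
    using mult_right_mono[OF _ a_nonneg[of t]] by fastforce
  ultimately show ?thesis
    by (simp add: lessThan_Suc_atMost[symmetric] distrib_left)
qed

lemma push_sum_geometric_deviation_le:
  fixes x d :: "nat \<Rightarrow> 'v::finite \<Rightarrow> 'b::real_normed_vector"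
    and y \<phi> :: "nat \<Rightarrow> 'v \<Rightarrow> real"
  assumes x_rec: "\<And>t i. x (Suc t) i = (\<Sum>j\<in>UNIV. W t i j *\<^sub>R x t j) - d t i"
    and y_rec: "\<And>t i. y (Suc t) i = (\<Sum>j\<in>UNIV. W t i j * y t j)"
    and y_0: "\<And>i. y 0 i = 1"
    and y_ge: "\<And>t i. \<eta> \<le> y t i" and \<eta>_pos: "0 < \<eta>"
    and column_sum: "\<And>t j. (\<Sum>i\<in>UNIV. W t i j) = 1"
    and \<mu>_range: "0 < \<mu>" "\<mu> \<le> 1"
    and mixing: "\<And>i j t s. s \<le> t \<Longrightarrow> \<bar>PhiW W (Suc t) s i j - \<phi> t i\<bar> \<le> 4 * \<mu> ^ (t - s)"
    and perturbation: "\<And>s. (\<Sum>j\<in>UNIV. norm (d s j)) \<le> \<alpha> s * C"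
    and \<alpha>_nonneg: "\<And>s. 0 \<le> \<alpha> s" and C_nonneg: "0 \<le> C"
  shows "norm ((1 / y (Suc t) i) *\<^sub>R x (Suc t) i - (1 / real CARD('v)) *\<^sub>R (\<Sum>k\<in>UNIV. x t k))
       \<le> 8 / \<eta> * \<mu> ^ t * (\<Sum>k\<in>UNIV. norm (x 0 k))
         + 8 * C / (\<eta> * \<mu>) * (\<Sum>s\<le>t. \<mu> ^ (t - s) * \<alpha> s)"
proof -
  have "(\<Sum>s<t. 8 * \<mu> ^ (t - Suc s) * (\<alpha> s * C)) + \<alpha> t * C
      \<le> 8 / \<mu> * (\<Sum>s\<le>t. \<mu> ^ (t - s) * (\<alpha> s * C))"
    using \<mu>_range \<alpha>_nonneg C_nonneg by (intro sum_lessThan_power_Suc_le) auto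
  also have "\<dots> = 8 * C / \<mu> * (\<Sum>s\<le>t. \<mu> ^ (t - s) * \<alpha> s)"
    by (simp add: sum_distrib_left sum_divide_distrib mult_ac)
  finally have perturbations_le: "(\<Sum>s<t. 8 * \<mu> ^ (t - Suc s) * (\<alpha> s * C)) + \<alpha> t * C
      \<le> 8 * C / \<mu> * (\<Sum>s\<le>t. \<mu> ^ (t - s) * \<alpha> s)" .
  have "norm ((1 / y (Suc t) i) *\<^sub>R x (Suc t) i - (1 / real CARD('v)) *\<^sub>R (\<Sum>k\<in>UNIV. x t k))
      \<le> (8 * \<mu> ^ t * (\<Sum>j\<in>UNIV. norm (x 0 j))
          + (\<Sum>s<t. 8 * \<mu> ^ (t - Suc s) * (\<alpha> s * C)) + \<alpha> t * C) / \<eta>"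
    using \<mu>_range by (intro push_sum_ratio_deviation_le[where x = x and d = d, OF x_rec y_rec y_0 y_ge
          \<eta>_pos column_sum _ _ mixing perturbation]) auto
  also have "\<dots> \<le> (8 * \<mu> ^ t * (\<Sum>j\<in>UNIV. norm (x 0 j))
          + 8 * C / \<mu> * (\<Sum>s\<le>t. \<mu> ^ (t - s) * \<alpha> s)) / \<eta>"
    using perturbations_le \<eta>_pos by (intro divide_right_mono) auto
  also have "\<dots> = 8 / \<eta> * \<mu> ^ t * (\<Sum>k\<in>UNIV. norm (x 0 k))
      + 8 * C / (\<eta> * \<mu>) * (\<Sum>s\<le>t. \<mu> ^ (t - s) * \<alpha> s)"
    by (simp add: add_divide_distrib)
  finally show ?thesis .
qed

lemma sum_power_diff_le:
  fixes \<mu> :: real assumes "0 \<le> \<mu>" "\<mu> < 1"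
  shows "(\<Sum>s\<le>b. \<mu> ^ (b - s)) \<le> 1 / (1 - \<mu>)"
proof (induction b)
  case 0 then show ?case using assms by (simp add: field_simps)
next
  case (Suc b)
  have "(\<Sum>s\<le>Suc b. \<mu> ^ (Suc b - s)) = \<mu> * (\<Sum>s\<le>b. \<mu> ^ (b - s)) + 1"
    by (simp add: sum_distrib_left Suc_diff_le power_Suc)
  also have "\<dots> \<le> \<mu> * (1 / (1 - \<mu>)) + 1"
    using Suc.IH assms by (intro add_right_mono mult_left_mono) auto
  also have "\<dots> = 1 / (1 - \<mu>)" using assms by (simp add: field_simps)
  finally show ?case .
qed

lemma sum_power_diff_mult_antimono_head_le:
  fixes \<mu> :: real and \<alpha> :: "nat \<Rightarrow> real"
  assumes \<mu>_range: "0 \<le> \<mu>" "\<mu> < 1" and "antimono \<alpha>" and \<alpha>_nonneg: "\<And>t. 0 \<le> \<alpha> t"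
    and "m \<le> t"
  shows "(\<Sum>s<m. \<mu> ^ (t - s) * \<alpha> s) \<le> \<alpha> 0 * \<mu> ^ (t + 1 - m) / (1 - \<mu>)"
proof (cases "m = 0")
  case True
  then show ?thesis using \<mu>_range \<alpha>_nonneg[of 0] by simp
next
  case False
  have "(\<Sum>s<m. \<mu> ^ (t - s) * \<alpha> s) \<le> (\<Sum>s<m. \<mu> ^ (t + 1 - m) * (\<mu> ^ (m - 1 - s) * \<alpha> 0))"
  proof (rule sum_mono)
    fix s assume "s \<in> {..<m}"
    then have "\<mu> ^ (t - s) = \<mu> ^ (t + 1 - m) * \<mu> ^ (m - 1 - s)"
      using \<open>m \<le> t\<close> by (simp add: power_add[symmetric])
    moreover have "\<alpha> s \<le> \<alpha> 0"
      using \<open>antimono \<alpha>\<close> by (simp add: antimono_def)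
    ultimately show "\<mu> ^ (t - s) * \<alpha> s \<le> \<mu> ^ (t + 1 - m) * (\<mu> ^ (m - 1 - s) * \<alpha> 0)"
      using \<mu>_range by (simp add: mult.assoc mult_left_mono)
  qed
  also have "\<dots> = \<mu> ^ (t + 1 - m) * \<alpha> 0 * (\<Sum>s\<le>m - 1. \<mu> ^ (m - 1 - s))"
    using False by (simp add: sum_distrib_left mult_ac lessThan_Suc_atMost[symmetric])
  also have "\<dots> \<le> \<mu> ^ (t + 1 - m) * \<alpha> 0 * (1 / (1 - \<mu>))"
    using sum_power_diff_le[OF \<mu>_range, of "m - 1"] \<mu>_range \<alpha>_nonneg[of 0]
    by (intro mult_left_mono) auto
  finally show ?thesis by (simp add: mult.commute)
qed

lemma sum_power_diff_mult_antimono_tail_le: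
  fixes \<mu> :: real and \<alpha> :: "nat \<Rightarrow> real"
  assumes \<mu>_range: "0 \<le> \<mu>" "\<mu> < 1" and "antimono \<alpha>" and "0 \<le> \<alpha> m"
  shows "(\<Sum>s=m..t. \<mu> ^ (t - s) * \<alpha> s) \<le> \<alpha> m / (1 - \<mu>)"
proof -
  have "(\<Sum>s=m..t. \<mu> ^ (t - s) * \<alpha> s) \<le> (\<Sum>s=m..t. \<mu> ^ (t - s) * \<alpha> m)"
    by (rule sum_mono) (use \<open>antimono \<alpha>\<close> \<mu>_range in \<open>auto simp: antimono_def intro!: mult_left_mono\<close>)
  also have "\<dots> \<le> (\<Sum>s\<le>t. \<mu> ^ (t - s)) * \<alpha> m"
    unfolding sum_distrib_right[symmetric]
    by (intro mult_right_mono sum_mono2) (use \<open>0 \<le> \<alpha> m\<close> \<mu>_range in auto)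
  also have "\<dots> \<le> 1 / (1 - \<mu>) * \<alpha> m"
    using sum_power_diff_le[OF \<mu>_range, of t] \<open>0 \<le> \<alpha> m\<close> by (intro mult_right_mono) auto
  finally show ?thesis by simp
qed

lemma sum_power_diff_mult_antimono_le:
  fixes \<mu> :: real and \<alpha> :: "nat \<Rightarrow> real"
  assumes \<mu>_range: "0 < \<mu>" "\<mu> < 1" and "antimono \<alpha>" and \<alpha>_nonneg: "\<And>t. 0 \<le> \<alpha> t"
  shows "(\<Sum>s\<le>t. \<mu> ^ (t - s) * \<alpha> s)
     \<le> (\<alpha> 0 * \<mu> powr (real t / 2) + \<alpha> (nat \<lceil>real t / 2\<rceil>)) / (1 - \<mu>)"
proof -
  define m where "m = nat \<lceil>real t / 2\<rceil>"
  have "m \<le> t" unfolding m_def by linarith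
  then have "{..t} = {..<m} \<union> {m..t}" by auto
  then have "(\<Sum>s\<le>t. \<mu> ^ (t - s) * \<alpha> s)
      = (\<Sum>s<m. \<mu> ^ (t - s) * \<alpha> s) + (\<Sum>s=m..t. \<mu> ^ (t - s) * \<alpha> s)"
    by (simp only:) (rule sum.union_disjoint, auto)
  moreover have "real t / 2 \<le> real (t + 1 - m)"
    unfolding m_def by linarith
  then have "\<mu> ^ (t + 1 - m) \<le> \<mu> powr (real t / 2)"
    using powr_mono'[of "real t / 2" "real (t + 1 - m)" \<mu>] \<mu>_range by (simp add: powr_realpow)
  then have "(\<Sum>s<m. \<mu> ^ (t - s) * \<alpha> s) \<le> \<alpha> 0 * \<mu> powr (real t / 2) / (1 - \<mu>)"
    using sum_power_diff_mult_antimono_head_le[OF less_imp_le[OF \<mu>_range(1)] \<mu>_range(2)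
        \<open>antimono \<alpha>\<close> \<alpha>_nonneg \<open>m \<le> t\<close>] \<mu>_range \<alpha>_nonneg[of 0]
    by (smt (verit) divide_right_mono mult_left_mono)
  moreover have "(\<Sum>s=m..t. \<mu> ^ (t - s) * \<alpha> s) \<le> \<alpha> m / (1 - \<mu>)"
    using \<mu>_range \<alpha>_nonneg \<open>antimono \<alpha>\<close> by (intro sum_power_diff_mult_antimono_tail_le) auto
  ultimately show ?thesis
    unfolding m_def by (simp add: add_divide_distrib)
qed

lemma heterogeneous_step_eq:
  fixes W :: "'v::finite \<Rightarrow> real" and x g :: "'v \<Rightarrow> 'b::real_vector"
  assumes "\<And>j. j \<notin> N \<Longrightarrow> W j = 0"
  shows "(\<Sum>j\<in>N. W j *\<^sub>R (x j - (a * \<sigma> j) *\<^sub>R g j)) - (a * (1 - \<sigma> i)) *\<^sub>R g i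
       = (\<Sum>j\<in>UNIV. W j *\<^sub>R x j) - a *\<^sub>R ((\<Sum>j\<in>UNIV. W j *\<^sub>R \<sigma> j *\<^sub>R g j) + (1 - \<sigma> i) *\<^sub>R g i)"
proof -
  have "(\<Sum>j\<in>N. W j *\<^sub>R (x j - (a * \<sigma> j) *\<^sub>R g j)) = (\<Sum>j\<in>UNIV. W j *\<^sub>R (x j - (a * \<sigma> j) *\<^sub>R g j))"
    by (rule sum.mono_neutral_left) (auto simp: assms)
  then show ?thesis
    by (simp add: scaleR_diff_right scaleR_add_right sum_subtractf scaleR_sum_right mult_ac)
qed

lemma sum_UNIV_eq_sum_out_nbrs:
  fixes W :: "'v::finite \<Rightarrow> 'v \<Rightarrow> real"
  assumes "\<And>i j. j \<notin> in_nbrs E i \<Longrightarrow> W i j = 0"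
  shows "(\<Sum>i\<in>UNIV. W i j) = (\<Sum>i\<in>out_nbrs E j. W i j)"
  by (rule sum.mono_neutral_right) (auto simp: assms in_nbrs_def out_nbrs_def)

lemma sum_norm_mixed_step_le:
  fixes W :: "'v::finite \<Rightarrow> 'v \<Rightarrow> real" and g :: "'v \<Rightarrow> 'b::real_normed_vector"
  assumes W_nonneg: "\<And>i j. 0 \<le> W i j"
    and column_sum: "\<And>j. (\<Sum>i\<in>UNIV. W i j) = 1"
    and \<sigma>_range: "\<And>j. 0 \<le> \<sigma> j" "\<And>j. \<sigma> j \<le> 1"
    and g_le: "\<And>j. norm (g j) \<le> G"
  shows "(\<Sum>i\<in>UNIV. norm ((\<Sum>j\<in>UNIV. W i j *\<^sub>R \<sigma> j *\<^sub>R g j) + (1 - \<sigma> i) *\<^sub>R g i))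
       \<le> real CARD('v) * G"
proof -
  have "(\<Sum>i\<in>UNIV. norm ((\<Sum>j\<in>UNIV. W i j *\<^sub>R \<sigma> j *\<^sub>R g j) + (1 - \<sigma> i) *\<^sub>R g i))
      \<le> (\<Sum>i\<in>UNIV. (\<Sum>j\<in>UNIV. W i j * (\<sigma> j * norm (g j))) + (1 - \<sigma> i) * norm (g i))"
  proof (intro sum_mono order_trans[OF norm_triangle_ineq] add_mono)
    fix i
    show "norm (\<Sum>j\<in>UNIV. W i j *\<^sub>R \<sigma> j *\<^sub>R g j) \<le> (\<Sum>j\<in>UNIV. W i j * (\<sigma> j * norm (g j)))"
      by (intro sum_norm_le) (simp add: W_nonneg \<sigma>_range abs_of_nonneg)
    show "norm ((1 - \<sigma> i) *\<^sub>R g i) \<le> (1 - \<sigma> i) * norm (g i)"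
      using \<sigma>_range(2)[of i] by simp
  qed
  also have "\<dots> = (\<Sum>j\<in>UNIV. \<sigma> j * norm (g j)) + (\<Sum>i\<in>UNIV. (1 - \<sigma> i) * norm (g i))"
    unfolding sum.distrib
    by (subst sum.swap) (simp add: sum_distrib_right[symmetric] column_sum)
  also have "\<dots> = (\<Sum>j\<in>UNIV. norm (g j))"
    unfolding sum.distrib[symmetric] by (simp add: algebra_simps)
  also have "\<dots> \<le> real CARD('v) * G"
    using sum_mono[of UNIV "\<lambda>j. norm (g j)" "\<lambda>_. G"] g_le by simp
  finally show ?thesis .
qed

theorem mainTheorem13:
  fixes E :: "nat \<Rightarrow> ('v::finite \<times> 'v) set"
    and w :: "nat \<Rightarrow> 'v \<Rightarrow> 'v \<Rightarrow> real"
    and \<beta> :: real and L :: nat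
    and f :: "'v \<Rightarrow> 'a::euclidean_space \<Rightarrow> real"
    and \<sigma> :: "nat \<Rightarrow> 'v \<Rightarrow> real"
    and \<alpha> :: "nat \<Rightarrow> real"
    and x z g :: "nat \<Rightarrow> 'v \<Rightarrow> 'a"
    and y :: "nat \<Rightarrow> 'v \<Rightarrow> real"
    and G \<eta> \<mu> :: real
  assumes self_arcs: "\<And>t i. (i, i) \<in> E t"
    and w_pos: "\<And>t i j. j \<in> in_nbrs (E t) i \<Longrightarrow> w t i j > 0"
    and w_zero: "\<And>t i j. j \<notin> in_nbrs (E t) i \<Longrightarrow> w t i j = 0"
    and beta_pos: "\<beta> > 0"
    and w_ge_beta: "\<And>t i j. j \<in> in_nbrs (E t) i \<Longrightarrow> w t i j \<ge> \<beta>"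
    and col_stoch: "\<And>t i. (\<Sum>j\<in>out_nbrs (E t) i. w t j i) = 1"
    and usc: "USC E L"
    and convex_f: "\<And>i. convex_on UNIV (f i)"
    and sigma_01: "\<And>t i. \<sigma> t i \<in> {0, 1}"
    and alpha_pos: "\<And>t. \<alpha> t > 0"
    and x_step: "\<And>t i. x (Suc t) i =
         (\<Sum>j\<in>in_nbrs (E t) i. w t i j *\<^sub>R (x t j - (\<alpha> t * \<sigma> t j) *\<^sub>R g t j))
         - (\<alpha> t * (1 - \<sigma> t i)) *\<^sub>R g t i"
    and y_0: "\<And>i. y 0 i = 1"
    and y_step: "\<And>t i. y (Suc t) i = (\<Sum>j\<in>in_nbrs (E t) i. w t i j * y t j)"
    and z_def: "\<And>t i. z t i = (1 / y t i) *\<^sub>R x t i"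
    and g_subgrad: "\<And>t i. is_subgradient (f i) (z t i) (g t i)"
    and G_pos: "G > 0"
    and g_bound: "\<And>t i. norm (g t i) \<le> G"
    and eta_pos: "\<eta> > 0"
    and y_ge_eta: "\<And>t i. y t i \<ge> \<eta>"
    and mu_range: "0 < \<mu>" "\<mu> < 1"
    and mu_prop: "\<exists>\<phi> :: nat \<Rightarrow> 'v \<Rightarrow> real. (\<forall>t. stochastic_vec (\<phi> t)) \<and>
         (\<forall>i j t s. s \<le> t \<longrightarrow>
            \<bar>PhiW (\<lambda>k a b. w k a b) (t + 1) s i j - \<phi> t i\<bar> \<le> 4 * \<mu> ^ (t - s))"
  shows "(\<forall>t i. norm (z (Suc t) i - (1 / real CARD('v)) *\<^sub>R (\<Sum>k\<in>UNIV. x t k))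
            \<le> 8 / \<eta> * \<mu> ^ t * (\<Sum>k\<in>UNIV. norm (x 0 k))
              + 8 * real CARD('v) * G / (\<eta> * \<mu>) * (\<Sum>s\<le>t. \<mu> ^ (t - s) * \<alpha> s))
       \<and> ((antimono \<alpha> \<and> \<not> summable \<alpha> \<and> summable (\<lambda>t. (\<alpha> t)\<^sup>2)) \<longrightarrow>
          (\<forall>t i. norm (z (Suc t) i - (1 / real CARD('v)) *\<^sub>R (\<Sum>k\<in>UNIV. x t k))
            \<le> 8 / \<eta> * \<mu> ^ t * (\<Sum>k\<in>UNIV. norm (x 0 k))
              + 8 * real CARD('v) * G / (\<eta> * \<mu> * (1 - \<mu>))
                * (\<alpha> 0 * \<mu> powr (real t / 2) + \<alpha> (nat \<lceil>real t / 2\<rceil>))))"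
proof -
  have w_nonneg: "0 \<le> w t i j" for t i j
    using w_pos[of j t i] w_zero[of j t i] by (cases "j \<in> in_nbrs (E t) i") auto
  have column_sum: "(\<Sum>i\<in>UNIV. w t i j) = 1" for t j
    using col_stoch[of t j] sum_UNIV_eq_sum_out_nbrs[of "E t" "w t"] w_zero by simp
  define d where "d t i = \<alpha> t *\<^sub>R ((\<Sum>j\<in>UNIV. w t i j *\<^sub>R \<sigma> t j *\<^sub>R g t j) + (1 - \<sigma> t i) *\<^sub>R g t i)"
    for t i
  have x_rec: "x (Suc t) i = (\<Sum>j\<in>UNIV. w t i j *\<^sub>R x t j) - d t i" for t i
    unfolding x_step d_def by (rule heterogeneous_step_eq) (rule w_zero)
  have y_rec: "y (Suc t) i = (\<Sum>j\<in>UNIV. w t i j * y t j)" for t i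
    unfolding y_step by (rule sum.mono_neutral_left) (auto simp: w_zero)
  have \<sigma>_range: "0 \<le> \<sigma> t j" "\<sigma> t j \<le> 1" for t j
    using sigma_01[of t j] by auto
  have "(\<Sum>i\<in>UNIV. norm ((\<Sum>j\<in>UNIV. w s i j *\<^sub>R \<sigma> s j *\<^sub>R g s j) + (1 - \<sigma> s i) *\<^sub>R g s i))
      \<le> real CARD('v) * G" for s
    by (intro sum_norm_mixed_step_le w_nonneg column_sum \<sigma>_range g_bound)
  then have d_bound: "(\<Sum>j\<in>UNIV. norm (d s j)) \<le> \<alpha> s * (real CARD('v) * G)" for s
    using alpha_pos[of s] by (simp add: d_def sum_distrib_left[symmetric] mult_left_mono)
  obtain \<phi> :: "nat \<Rightarrow> 'v \<Rightarrow> real" where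
    mixing: "\<And>i j t s. s \<le> t \<Longrightarrow> \<bar>PhiW w (Suc t) s i j - \<phi> t i\<bar> \<le> 4 * \<mu> ^ (t - s)"
    using mu_prop by auto
  have part1: "norm (z (Suc t) i - (1 / real CARD('v)) *\<^sub>R (\<Sum>k\<in>UNIV. x t k))
      \<le> 8 / \<eta> * \<mu> ^ t * (\<Sum>k\<in>UNIV. norm (x 0 k))
        + 8 * real CARD('v) * G / (\<eta> * \<mu>) * (\<Sum>s\<le>t. \<mu> ^ (t - s) * \<alpha> s)" for t i
    using push_sum_geometric_deviation_le[where x = x and d = d, OF x_rec y_rec y_0 y_ge_eta eta_pos
        column_sum _ _ mixing d_bound] mu_range alpha_pos G_pos
    by (simp add: z_def mult.assoc less_imp_le)
  moreover have "8 * real CARD('v) * G / (\<eta> * \<mu>) * (\<Sum>s\<le>t. \<mu> ^ (t - s) * \<alpha> s)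
      \<le> 8 * real CARD('v) * G / (\<eta> * \<mu> * (1 - \<mu>))
        * (\<alpha> 0 * \<mu> powr (real t / 2) + \<alpha> (nat \<lceil>real t / 2\<rceil>))" if "antimono \<alpha>" for t
    using mult_left_mono[OF sum_power_diff_mult_antimono_le[OF mu_range that],
        of "8 * real CARD('v) * G / (\<eta> * \<mu>)"] alpha_pos G_pos eta_pos mu_range
    by (simp add: less_imp_le)
  ultimately show ?thesis
    by (meson order_trans add_left_mono)
qed

end
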